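(* Let $\mathcal H$ be a real Hilbert space. Let $(T_i)_{i\in I}$ be a finite family of nonexpansive operators from $\mathcal H$ to $\mathcal H$ such that $\bigcap_{i\in I}\mathrm{Fix}\,T_i\neq\varnothing$, and let $(\alpha_i)_{i\in I}$ be real numbers in $\left]0,1\right[$ such that, for every $i\in I$, $T_i$ is $\alpha_i$-averaged. Let $p$ be a strictly positive integer, for every $k\in\{1,\ldots,p\}$ let $m_k$ be a strictly positive integer and let $\omega_k\in\left]0,1\right]$, and suppose that $\mathrm{i}\colon\{(k,l)\mid k\in\{1,\ldots,p\},\,l\in\{1,\ldots,m_k\}\}\to I$ is surjective and that $\sum_{k=1}^{p}\omega_k=1$. Define $$T=\sum_{k=1}^{p}\omega_kT_{\mathrm{i}(k,1)}\cdots T_{\mathrm{i}(k,m_k)}.$$ Then: (i) Setting $$\alpha=\sum_{k=1}^{p}\dfrac{\omega_k}{1+\dfrac{1}{\sum_{i=1}^{m_k}\dfrac{\alpha_{\mathrm{i}(k,i)}}{1-\alpha_{\mathrm{i}(k,i)}}}},$$ $T$ is $\alpha$-averaged and $\mathrm{Fix}\,T=\bigcap_{i\in I}\mathrm{Fix}\,T_i$. (ii) Let $(\lambda_n)_{n\in\mathbb N}$ be a sequence in $\left]0,1/\alpha\right[$ (with $\alpha$ as in (i)) such that $\sum_{n\in\mathbb N}\lambda_n(1/\alpha-\lambda_n)=+\infty$, let $x_0\in\mathcal H$, and set $x_{n+1}=x_n+\lambda_n(Tx_n-x_n)$ for every $n\in\mathbb N$. Then $(x_n)_{n\in\mathbb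 N}$ converges weakly to a point in $\bigcap_{i\in I}\mathrm{Fix}\,T_i$.
   Context: An operator $T\colon D\to\mathcal H$ ($D\subset\mathcal H$ nonempty) is nonexpansive if it is 1-Lipschitz. For $\alpha\in\left]0,1\right[$, a nonexpansive $T$ is $\alpha$-averaged if there exists a nonexpansive $R\colon D\to\mathcal H$ with $T=(1-\alpha)\mathrm{Id}+\alpha R$. $\mathrm{Fix}\,T=\{x\mid Tx=x\}$. *)

theory Defs
  imports "HOL-Analysis.Analysis"
begin

definition nonexpansive :: "('a::real_normed_vector \<Rightarrow> 'a) \<Rightarrow> bool" where
  "nonexpansive T \<longleftrightarrow> (\<forall>x y. norm (T x - T y) \<le> norm (x - y))"

definition averaged :: "real \<Rightarrow> ('a::real_normed_vector \<Rightarrow> 'a) \<Rightarrow> bool" where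
  "averaged \<alpha> T \<longleftrightarrow> 0 < \<alpha> \<and> \<alpha> < 1 \<and> nonexpansive T \<and>
     (\<exists>R. nonexpansive R \<and> T = (\<lambda>x. (1 - \<alpha>) *\<^sub>R x + \<alpha> *\<^sub>R R x))"

definition Fix :: "('a \<Rightarrow> 'a) \<Rightarrow> 'a set" where
  "Fix T = {x. T x = x}"

definition weakly_converges :: "(nat \<Rightarrow> 'a::real_inner) \<Rightarrow> 'a \<Rightarrow> bool" where
  "weakly_converges x z \<longleftrightarrow> (\<forall>y. (\<lambda>n. inner (x n) y) \<longlonglongrightarrow> inner z y)"

text \<open>Composition T_{i(k,1)} o ... o T_{i(k,m)} (the rightmost is applied first).\<close>
definition comp_chain :: "('i \<Rightarrow> 'a \<Rightarrow> 'a) \<Rightarrow> (nat \<Rightarrow> 'i) \<Rightarrow> nat \<Rightarrow> 'a \<Rightarrow> 'a" where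
  "comp_chain T ix m = foldr (\<circ>) (map (\<lambda>l. T (ix l)) [1..<m+1]) id"

end

theory Submission
  imports Defs "HOL-Library.Diagonal_Subsequence"
begin

text \<open>Write \<open>b = \<alpha> / (1 - \<alpha>)\<close>. An operator is \<open>\<alpha>\<close>-averaged iff
  \<open>b \<parallel>T x - T y\<parallel>\<^sup>2 + \<parallel>(x - T x) - (y - T y)\<parallel>\<^sup>2 \<le> b \<parallel>x - y\<parallel>\<^sup>2\<close>; in this form the constants \<open>b\<close>
  add up along compositions, which gives the averagedness constant of each chain
  \<open>T (idx k 1) \<circ> \<dots> \<circ> T (idx k (m k))\<close>, and a convex combination of averaged operators is averaged
  with the convex combination of the constants. Averaged operators with a common fixed point \<open>z\<close>
  move every non-fixed point strictly closer to \<open>z\<close>; this property survives compositions and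
  convex combinations and pins down their fixed point sets.

  Part (ii) is the Krasnosel'skii--Mann theorem for \<open>T = (1 - \<alpha>) Id + \<alpha> R\<close>: the iterates are
  Fejer monotone with respect to \<open>Fix T\<close> and asymptotically regular, so by demiclosedness of
  \<open>Id - R\<close> every weak sequential cluster point is a fixed point, and Opial's argument shows
  that there is only one. Weak sequential compactness of bounded sequences is derived from the
  projection theorem by a diagonal argument and the Riesz representation theorem.\<close>

lemma power2_norm_convex_combination:
  fixes u v :: "'a::real_inner"
  shows "(norm ((1 - t) *\<^sub>R u + t *\<^sub>R v))\<^sup>2
    = (1 - t) * (norm u)\<^sup>2 + t * (norm v)\<^sup>2 - t * (1 - t) * (norm (u - v))\<^sup>2"
  unfolding power2_norm_eq_inner
  by (simp add: inner_diff_left inner_diff_right inner_add_left inner_add_right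
      inner_commute algebra_simps)

section \<open>Averaged operators\<close>

lemma nonexpansive_relaxation:
  fixes R :: "'a::real_normed_vector \<Rightarrow> 'a"
  assumes "nonexpansive R" and "0 \<le> \<alpha>" and "\<alpha> \<le> 1"
  shows "nonexpansive (\<lambda>x. (1 - \<alpha>) *\<^sub>R x + \<alpha> *\<^sub>R R x)"
  unfolding nonexpansive_def
proof (intro allI)
  fix x y
  have "norm (((1 - \<alpha>) *\<^sub>R x + \<alpha> *\<^sub>R R x) - ((1 - \<alpha>) *\<^sub>R y + \<alpha> *\<^sub>R R y))
      = norm ((1 - \<alpha>) *\<^sub>R (x - y) + \<alpha> *\<^sub>R (R x - R y))"
    by (simp add: algebra_simps)
  also have "\<dots> \<le> (1 - \<alpha>) * norm (x - y) + \<alpha> * norm (R x - R y)"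
    using norm_triangle_ineq[of "(1 - \<alpha>) *\<^sub>R (x - y)" "\<alpha> *\<^sub>R (R x - R y)"] assms(2,3) by simp
  also have "\<dots> \<le> (1 - \<alpha>) * norm (x - y) + \<alpha> * norm (x - y)"
    using assms unfolding nonexpansive_def by (intro add_left_mono mult_left_mono) auto
  finally show "norm (((1 - \<alpha>) *\<^sub>R x + \<alpha> *\<^sub>R R x) - ((1 - \<alpha>) *\<^sub>R y + \<alpha> *\<^sub>R R y)) \<le> norm (x - y)"
    by (simp add: algebra_simps)
qed

lemma averagedI:
  assumes "0 < \<alpha>" and "\<alpha> < 1" and "nonexpansive R"
    and "T = (\<lambda>x. (1 - \<alpha>) *\<^sub>R x + \<alpha> *\<^sub>R R x)"
  shows "averaged \<alpha> T"
  using assms nonexpansive_relaxation[of R \<alpha>] unfolding averaged_def by auto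

lemma averaged_bounds:
  assumes "averaged \<alpha> T"
  shows "0 < \<alpha>" and "\<alpha> < 1"
  using assms unfolding averaged_def by simp_all

text \<open>With \<open>b = \<alpha> / (1 - \<alpha>)\<close>, this is the characterisation of \<open>\<alpha>\<close>-averagedness
  \<open>\<parallel>T x - T y\<parallel>\<^sup>2 + (1 - \<alpha>) / \<alpha> \<parallel>(x - T x) - (y - T y)\<parallel>\<^sup>2 \<le> \<parallel>x - y\<parallel>\<^sup>2\<close>, multiplied by \<open>b\<close>.\<close>

definition averaging_ineq :: "real \<Rightarrow> ('a::real_inner \<Rightarrow> 'a) \<Rightarrow> bool" where
  "averaging_ineq b T \<longleftrightarrow> (\<forall>x y.
     b * (norm (T x - T y))\<^sup>2 + (norm ((x - T x) - (y - T y)))\<^sup>2 \<le> b * (norm (x - y))\<^sup>2)"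

lemma averaged_imp_averaging_ineq:
  fixes T :: "'a::real_inner \<Rightarrow> 'a"
  assumes "averaged \<alpha> T"
  shows "averaging_ineq (\<alpha> / (1 - \<alpha>)) T"
  unfolding averaging_ineq_def
proof (intro allI)
  fix x y :: 'a
  obtain R where "nonexpansive R" and T: "T = (\<lambda>x. (1 - \<alpha>) *\<^sub>R x + \<alpha> *\<^sub>R R x)"
    and "0 < \<alpha>" "\<alpha> < 1"
    using assms unfolding averaged_def by blast
  define u where "u = x - y"
  define r where "r = R x - R y"
  have "norm r \<le> norm u"
    using \<open>nonexpansive R\<close> unfolding nonexpansive_def u_def r_def by blast
  then have "(norm r)\<^sup>2 \<le> (norm u)\<^sup>2"
    by (simp add: power_mono)
  have "T x - T y = (1 - \<alpha>) *\<^sub>R u + \<alpha> *\<^sub>R r"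
    by (simp add: T u_def r_def algebra_simps)
  then have Tdiff: "(norm (T x - T y))\<^sup>2
      = (1 - \<alpha>) * (norm u)\<^sup>2 + \<alpha> * (norm r)\<^sup>2 - \<alpha> * (1 - \<alpha>) * (norm (u - r))\<^sup>2"
    by (simp add: power2_norm_convex_combination)
  have "(x - T x) - (y - T y) = \<alpha> *\<^sub>R (u - r)"
    by (simp add: T u_def r_def algebra_simps)
  then have "\<alpha> / (1 - \<alpha>) * (norm (T x - T y))\<^sup>2 + (norm ((x - T x) - (y - T y)))\<^sup>2
      = \<alpha> / (1 - \<alpha>) * ((1 - \<alpha>) * (norm u)\<^sup>2 + \<alpha> * (norm r)\<^sup>2
          - \<alpha> * (1 - \<alpha>) * (norm (u - r))\<^sup>2) + \<alpha>\<^sup>2 * (norm (u - r))\<^sup>2"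
    by (simp add: Tdiff power_mult_distrib)
  also have "\<dots> = \<alpha> * (norm u)\<^sup>2 + \<alpha>\<^sup>2 / (1 - \<alpha>) * (norm r)\<^sup>2"
    using \<open>\<alpha> < 1\<close> by (simp add: field_simps power2_eq_square)
  also have "\<dots> \<le> \<alpha> * (norm u)\<^sup>2 + \<alpha>\<^sup>2 / (1 - \<alpha>) * (norm u)\<^sup>2"
    using \<open>\<alpha> < 1\<close> \<open>(norm r)\<^sup>2 \<le> (norm u)\<^sup>2\<close> by (intro add_left_mono mult_left_mono) auto
  also have "\<dots> = \<alpha> / (1 - \<alpha>) * (norm (x - y))\<^sup>2"
    using \<open>\<alpha> < 1\<close> by (simp add: u_def field_simps power2_eq_square)
  finally show "\<alpha> / (1 - \<alpha>) * (norm (T x - T y))\<^sup>2 + (norm ((x - T x) - (y - T y)))\<^sup>2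
      \<le> \<alpha> / (1 - \<alpha>) * (norm (x - y))\<^sup>2" .
qed

lemma averaging_ineq_imp_averaged:
  fixes T :: "'a::real_inner \<Rightarrow> 'a"
  assumes ineq: "averaging_ineq b T" and "0 < b"
  shows "averaged (b / (1 + b)) T"
proof (rule averagedI)
  define \<alpha> where "\<alpha> = b / (1 + b)"
  show "0 < \<alpha>" "\<alpha> < 1"
    using \<open>0 < b\<close> by (simp_all add: \<alpha>_def)
  \<comment> \<open>\<open>R = (1 / \<alpha>) T - (1 / b) Id\<close> solves \<open>T = (1 - \<alpha>) Id + \<alpha> R\<close>.\<close>
  define t where "t = (1 + b) / b"
  define R where "R x = t *\<^sub>R T x + (1 - t) *\<^sub>R x" for x
  have "b + b * b \<noteq> 0"
    using \<open>0 < b\<close> by (smt (verit) mult_pos_pos)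
  then have "\<alpha> * t = 1" "(1 - \<alpha>) + \<alpha> * (1 - t) = 0"
    using \<open>0 < b\<close> by (simp_all add: \<alpha>_def t_def field_simps)
  moreover have "(1 - \<alpha>) *\<^sub>R x + \<alpha> *\<^sub>R R x = (\<alpha> * t) *\<^sub>R T x + ((1 - \<alpha>) + \<alpha> * (1 - t)) *\<^sub>R x" for x
    by (simp add: R_def algebra_simps)
  ultimately show "T = (\<lambda>x. (1 - \<alpha>) *\<^sub>R x + \<alpha> *\<^sub>R R x)"
    by simp
  show "nonexpansive R"
    unfolding nonexpansive_def
  proof (intro allI)
    fix x y :: 'a
    define u where "u = x - y"
    define v where "v = T x - T y"
    have "b * (norm v)\<^sup>2 + (norm (u - v))\<^sup>2 \<le> b * (norm u)\<^sup>2"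
      using ineq unfolding averaging_ineq_def u_def v_def by (simp add: algebra_simps)
    have "R x - R y = (1 - t) *\<^sub>R u + t *\<^sub>R v"
      by (simp add: R_def u_def v_def algebra_simps)
    then have "(norm (R x - R y))\<^sup>2 = (1 - t) * (norm u)\<^sup>2 + t * (norm v)\<^sup>2 - t * (1 - t) * (norm (u - v))\<^sup>2"
      by (simp add: power2_norm_convex_combination)
    also have "\<dots> = ((1 + b) * (b * (norm v)\<^sup>2 + (norm (u - v))\<^sup>2) - b * (norm u)\<^sup>2) / b\<^sup>2"
      using \<open>0 < b\<close> by (simp add: t_def field_simps power2_eq_square)
    also have "\<dots> \<le> ((1 + b) * (b * (norm u)\<^sup>2) - b * (norm u)\<^sup>2) / b\<^sup>2"
      using \<open>0 < b\<close> \<open>b * (norm v)\<^sup>2 + (norm (u - v))\<^sup>2 \<le> b * (norm u)\<^sup>2\<close>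
      by (intro divide_right_mono diff_right_mono mult_left_mono) auto
    also have "\<dots> = (norm u)\<^sup>2"
      using \<open>0 < b\<close> by (simp add: field_simps power2_eq_square)
    finally show "norm (R x - R y) \<le> norm (x - y)"
      unfolding u_def by (rule power2_le_imp_le) simp
  qed
qed

lemma averaging_ineq_comp:
  fixes T S :: "'a::real_inner \<Rightarrow> 'a"
  assumes T: "averaging_ineq b1 T" and S: "averaging_ineq b2 S" and "0 \<le> b1" "0 \<le> b2"
  shows "averaging_ineq (b1 + b2) (T \<circ> S)"
  unfolding averaging_ineq_def
proof (intro allI)
  fix x y :: 'a
  define u where "u = x - y"
  define w where "w = S x - S y"
  define v where "v = T (S x) - T (S y)"
  define a where "a = u - w"
  define c where "c = w - v"
  have S_ineq: "b2 * (norm w)\<^sup>2 + (norm a)\<^sup>2 \<le> b2 * (norm u)\<^sup>2"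
    using S unfolding averaging_ineq_def u_def w_def a_def by (simp add: algebra_simps)
  have T_ineq: "b1 * (norm v)\<^sup>2 + (norm c)\<^sup>2 \<le> b1 * (norm w)\<^sup>2"
    using T unfolding averaging_ineq_def w_def v_def c_def by (simp add: algebra_simps)
  have "(b1 + b2) * (norm v)\<^sup>2 + (norm (a + c))\<^sup>2 \<le> (b1 + b2) * (norm u)\<^sup>2"
  proof (cases "b1 = 0 \<or> b2 = 0")
    case True
    then show ?thesis
      using S_ineq T_ineq by (auto simp: a_def c_def)
  next
    case False
    then have "0 < b1 * b2"
      using \<open>0 \<le> b1\<close> \<open>0 \<le> b2\<close> by simp
    \<comment> \<open>Expanding \<open>0 \<le> \<parallel>b1 a - b2 c\<parallel>\<^sup>2\<close>.\<close>
    have "b1 * b2 * (norm (a + c))\<^sup>2 \<le> (b1 + b2) * (b1 * (norm a)\<^sup>2 + b2 * (norm c)\<^sup>2)"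
      using zero_le_power2[of "norm (b1 *\<^sub>R a - b2 *\<^sub>R c)"] unfolding power2_norm_eq_inner
      by (simp add: inner_diff_left inner_diff_right inner_add_left inner_add_right
          inner_commute algebra_simps power2_eq_square)
    then have "(b1 * b2) * ((b1 + b2) * (norm v)\<^sup>2 + (norm (a + c))\<^sup>2)
        \<le> (b1 + b2) * (b1 * (b2 * (norm w)\<^sup>2 + (norm a)\<^sup>2) + b2 * (b1 * (norm v)\<^sup>2 + (norm c)\<^sup>2) - b1 * b2 * (norm w)\<^sup>2)"
      by (simp add: algebra_simps)
    also have "\<dots> \<le> (b1 + b2) * (b1 * (b2 * (norm u)\<^sup>2) + b2 * (b1 * (norm w)\<^sup>2) - b1 * b2 * (norm w)\<^sup>2)"
      using S_ineq T_ineq \<open>0 \<le> b1\<close> \<open>0 \<le> b2\<close>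
      by (intro mult_left_mono diff_right_mono add_mono) auto
    also have "\<dots> = (b1 * b2) * ((b1 + b2) * (norm u)\<^sup>2)"
      by (simp add: algebra_simps)
    finally show ?thesis
      using \<open>0 < b1 * b2\<close> by (rule mult_left_le_imp_le)
  qed
  moreover have "(x - (T \<circ> S) x) - (y - (T \<circ> S) y) = a + c"
    by (simp add: a_def c_def u_def w_def v_def algebra_simps)
  ultimately show "(b1 + b2) * (norm ((T \<circ> S) x - (T \<circ> S) y))\<^sup>2
      + (norm ((x - (T \<circ> S) x) - (y - (T \<circ> S) y)))\<^sup>2 \<le> (b1 + b2) * (norm (x - y))\<^sup>2"
    by (simp add: v_def u_def)
qed

lemma comp_chain_0 [simp]: "comp_chain T ix 0 = id"
  by (simp add: comp_chain_def)

lemma foldr_comp_eq_comp: "foldr (\<circ>) fs g = foldr (\<circ>) fs id \<circ> g"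
  by (induction fs) (simp_all add: o_assoc)

lemma comp_chain_Suc: "comp_chain T ix (Suc m) = comp_chain T ix m \<circ> T (ix (Suc m))"
  unfolding comp_chain_def using foldr_comp_eq_comp[of _ "T (ix (Suc m))"] by simp

lemma averaging_ineq_comp_chain:
  fixes T :: "'i \<Rightarrow> 'a::real_inner \<Rightarrow> 'a"
  assumes "\<And>l. l \<in> {1..m} \<Longrightarrow> averaged (a (ix l)) (T (ix l))"
  shows "averaging_ineq (\<Sum>l=1..m. a (ix l) / (1 - a (ix l))) (comp_chain T ix m)"
  using assms
proof (induction m)
  case 0
  show ?case
    by (simp add: averaging_ineq_def)
next
  case (Suc m)
  define b where "b = (\<Sum>l=1..m. a (ix l) / (1 - a (ix l)))"
  define c where "c = a (ix (Suc m))"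
  have "averaged c (T (ix (Suc m)))"
    using Suc.prems[of "Suc m"] by (simp add: c_def)
  have "0 \<le> b"
    unfolding b_def
  proof (rule sum_nonneg)
    fix l
    assume "l \<in> {1..m}"
    then have "averaged (a (ix l)) (T (ix l))"
      using Suc.prems[of l] by simp
    then have "0 < a (ix l)" "a (ix l) < 1"
      by (rule averaged_bounds)+
    then show "0 \<le> a (ix l) / (1 - a (ix l))"
      by simp
  qed
  have "averaging_ineq b (comp_chain T ix m)"
    unfolding b_def using Suc.IH Suc.prems by simp
  moreover have "averaging_ineq (c / (1 - c)) (T (ix (Suc m)))"
    using \<open>averaged c (T (ix (Suc m)))\<close> by (rule averaged_imp_averaging_ineq)
  moreover have "0 \<le> c / (1 - c)"
    using averaged_bounds[OF \<open>averaged c (T (ix (Suc m)))\<close>] by simp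
  ultimately have "averaging_ineq (b + c / (1 - c)) (comp_chain T ix m \<circ> T (ix (Suc m)))"
    by (rule averaging_ineq_comp[OF _ _ \<open>0 \<le> b\<close>])
  moreover have "(\<Sum>l=1..Suc m. a (ix l) / (1 - a (ix l))) = b + c / (1 - c)"
    by (simp add: b_def c_def)
  ultimately show ?case
    by (simp only: comp_chain_Suc)
qed

lemma averaged_comp_chain:
  fixes T :: "'i \<Rightarrow> 'a::real_inner \<Rightarrow> 'a"
  assumes "0 < m" and avg: "\<And>l. l \<in> {1..m} \<Longrightarrow> averaged (a (ix l)) (T (ix l))"
  defines "b \<equiv> \<Sum>l=1..m. a (ix l) / (1 - a (ix l))"
  shows "averaged (b / (1 + b)) (comp_chain T ix m)"
proof (rule averaging_ineq_imp_averaged)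
  show "averaging_ineq b (comp_chain T ix m)"
    unfolding b_def using avg by (rule averaging_ineq_comp_chain)
  have "0 < a (ix l) / (1 - a (ix l))" if "l \<in> {1..m}" for l
    using averaged_bounds[OF avg[OF that]] by simp
  then show "0 < b"
    unfolding b_def using \<open>0 < m\<close> by (intro sum_pos) auto
qed

lemma averaged_convex_combination:
  fixes C :: "'k \<Rightarrow> 'a::real_normed_vector \<Rightarrow> 'a"
  assumes "finite K" and "K \<noteq> {}" and avg: "\<And>k. k \<in> K \<Longrightarrow> averaged (\<alpha> k) (C k)"
    and pos: "\<And>k. k \<in> K \<Longrightarrow> 0 < \<omega> k" and "sum \<omega> K = 1"
  shows "averaged (\<Sum>k\<in>K. \<omega> k * \<alpha> k) (\<lambda>x. \<Sum>k\<in>K. \<omega> k *\<^sub>R C k x)"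
proof -
  obtain R where R: "\<And>k. k \<in> K \<Longrightarrow> nonexpansive (R k) \<and>
      C k = (\<lambda>x. (1 - \<alpha> k) *\<^sub>R x + \<alpha> k *\<^sub>R R k x)"
    using avg unfolding averaged_def by metis
  have \<alpha>: "0 < \<alpha> k" "\<alpha> k < 1" if "k \<in> K" for k
    using averaged_bounds[OF avg[OF that]] by simp_all
  define A where "A = (\<Sum>k\<in>K. \<omega> k * \<alpha> k)"
  have "0 < A"
    unfolding A_def using assms \<alpha> by (intro sum_pos) auto
  have "A < sum \<omega> K"
    unfolding A_def using assms \<alpha> by (intro sum_strict_mono) auto
  define R' where "R' x = (\<Sum>k\<in>K. (\<omega> k * \<alpha> k / A) *\<^sub>R R k x)" for x
  show ?thesis
    unfolding A_def[symmetric]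
  proof (rule averagedI)
    show "0 < A" "A < 1"
      using \<open>0 < A\<close> \<open>A < sum \<omega> K\<close> \<open>sum \<omega> K = 1\<close> by simp_all
    show "(\<lambda>x. \<Sum>k\<in>K. \<omega> k *\<^sub>R C k x) = (\<lambda>x. (1 - A) *\<^sub>R x + A *\<^sub>R R' x)"
    proof
      fix x
      have "(\<Sum>k\<in>K. \<omega> k *\<^sub>R C k x)
          = (\<Sum>k\<in>K. \<omega> k *\<^sub>R x - (\<omega> k * \<alpha> k) *\<^sub>R x + (\<omega> k * \<alpha> k) *\<^sub>R R k x)"
        using R by (intro sum.cong) (auto simp: algebra_simps)
      also have "\<dots> = (\<Sum>k\<in>K. \<omega> k *\<^sub>R x) - (\<Sum>k\<in>K. (\<omega> k * \<alpha> k) *\<^sub>R x)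
          + (\<Sum>k\<in>K. (\<omega> k * \<alpha> k) *\<^sub>R R k x)"
        by (simp add: sum.distrib sum_subtractf)
      also have "(\<Sum>k\<in>K. \<omega> k *\<^sub>R x) = x"
        using \<open>sum \<omega> K = 1\<close> by (simp add: scaleR_sum_left[symmetric])
      also have "(\<Sum>k\<in>K. (\<omega> k * \<alpha> k) *\<^sub>R x) = A *\<^sub>R x"
        by (simp add: A_def scaleR_sum_left)
      also have "(\<Sum>k\<in>K. (\<omega> k * \<alpha> k) *\<^sub>R R k x) = A *\<^sub>R R' x"
        using \<open>0 < A\<close> by (simp add: R'_def scaleR_sum_right)
      also have "x - A *\<^sub>R x + A *\<^sub>R R' x = (1 - A) *\<^sub>R x + A *\<^sub>R R' x"
        by (simp add: algebra_simps)
      finally show "(\<Sum>k\<in>K. \<omega> k *\<^sub>R C k x) = (1 - A) *\<^sub>R x + A *\<^sub>R R' x" .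
    qed
    show "nonexpansive R'"
      unfolding nonexpansive_def
    proof (intro allI)
      fix x y
      have "norm (R' x - R' y) \<le> (\<Sum>k\<in>K. norm ((\<omega> k * \<alpha> k / A) *\<^sub>R (R k x - R k y)))"
        unfolding R'_def by (simp add: sum_subtractf[symmetric] scaleR_diff_right norm_sum)
      also have "\<dots> \<le> (\<Sum>k\<in>K. (\<omega> k * \<alpha> k / A) * norm (x - y))"
      proof (rule sum_mono)
        fix k
        assume "k \<in> K"
        then have "0 \<le> \<omega> k * \<alpha> k / A" "norm (R k x - R k y) \<le> norm (x - y)"
          using R pos \<alpha> \<open>0 < A\<close> unfolding nonexpansive_def by (auto intro: less_imp_le)
        then show "norm ((\<omega> k * \<alpha> k / A) *\<^sub>R (R k x - R k y)) \<le> (\<omega> k * \<alpha> k / A) * norm (x - y)"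
          by (simp only: norm_scaleR abs_of_nonneg mult_left_mono)
      qed
      also have "\<dots> = norm (x - y)"
        using \<open>0 < A\<close> by (simp add: A_def sum_distrib_right[symmetric] sum_divide_distrib[symmetric])
      finally show "norm (R' x - R' y) \<le> norm (x - y)" .
    qed
  qed
qed

definition strictly_quasi_nonexpansive_at :: "('a::real_normed_vector \<Rightarrow> 'a) \<Rightarrow> 'a \<Rightarrow> bool" where
  "strictly_quasi_nonexpansive_at T z \<longleftrightarrow> (\<forall>y. T y \<noteq> y \<longrightarrow> norm (T y - z) < norm (y - z))"

lemma strictly_quasi_nonexpansive_atD:
  assumes "strictly_quasi_nonexpansive_at T z"
  shows "norm (T y - z) \<le> norm (y - z)"
  using assms unfolding strictly_quasi_nonexpansive_at_def by (cases "T y = y") force+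

lemma averaged_imp_strictly_quasi_nonexpansive_at:
  fixes T :: "'a::real_inner \<Rightarrow> 'a"
  assumes "averaged \<alpha> T" and "z \<in> Fix T"
  shows "strictly_quasi_nonexpansive_at T z"
  unfolding strictly_quasi_nonexpansive_at_def
proof (intro allI impI)
  fix y
  assume "T y \<noteq> y"
  obtain R where "nonexpansive R" and T: "T = (\<lambda>x. (1 - \<alpha>) *\<^sub>R x + \<alpha> *\<^sub>R R x)"
    and "0 < \<alpha>" "\<alpha> < 1"
    using assms(1) unfolding averaged_def by blast
  have "\<alpha> *\<^sub>R (R z - z) = 0"
    using \<open>z \<in> Fix T\<close> by (simp add: Fix_def T algebra_simps)
  then have "R z = z"
    using \<open>0 < \<alpha>\<close> by simp
  then have "norm (R y - z) \<le> norm (y - z)"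
    using \<open>nonexpansive R\<close> unfolding nonexpansive_def by metis
  then have "\<alpha> * (norm (R y - z))\<^sup>2 \<le> \<alpha> * (norm (y - z))\<^sup>2"
    using \<open>0 < \<alpha>\<close> by (simp add: power_mono)
  moreover have "T y - z = (1 - \<alpha>) *\<^sub>R (y - z) + \<alpha> *\<^sub>R (R y - z)"
    by (simp add: T algebra_simps)
  then have "(norm (T y - z))\<^sup>2
      = (1 - \<alpha>) * (norm (y - z))\<^sup>2 + \<alpha> * (norm (R y - z))\<^sup>2 - \<alpha> * (1 - \<alpha>) * (norm (y - R y))\<^sup>2"
    by (simp add: power2_norm_convex_combination)
  moreover have "y \<noteq> R y"
    using \<open>T y \<noteq> y\<close> by (auto simp: T algebra_simps)
  then have "0 < \<alpha> * (1 - \<alpha>) * (norm (y - R y))\<^sup>2"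
    using \<open>0 < \<alpha>\<close> \<open>\<alpha> < 1\<close> by simp
  moreover have "(1 - \<alpha>) * (norm (y - z))\<^sup>2 + \<alpha> * (norm (y - z))\<^sup>2 = (norm (y - z))\<^sup>2"
    by (simp add: algebra_simps)
  ultimately have "(norm (T y - z))\<^sup>2 < (norm (y - z))\<^sup>2"
    by linarith
  then show "norm (T y - z) < norm (y - z)"
    by (simp add: power_less_imp_less_base)
qed

lemma strictly_quasi_nonexpansive_at_comp:
  assumes T: "strictly_quasi_nonexpansive_at T z" and S: "strictly_quasi_nonexpansive_at S z"
  shows "strictly_quasi_nonexpansive_at (T \<circ> S) z"
  and "Fix (T \<circ> S) = Fix T \<inter> Fix S"
proof -
  have less: "norm (T (S y) - z) < norm (y - z)" if "T (S y) \<noteq> y" for y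
  proof (cases "S y = y")
    case True
    then show ?thesis
      using T that unfolding strictly_quasi_nonexpansive_at_def by auto
  next
    case False
    then have "norm (S y - z) < norm (y - z)"
      using S unfolding strictly_quasi_nonexpansive_at_def by blast
    then show ?thesis
      using strictly_quasi_nonexpansive_atD[OF T, of "S y"] by linarith
  qed
  then show "strictly_quasi_nonexpansive_at (T \<circ> S) z"
    unfolding strictly_quasi_nonexpansive_at_def by simp
  \<comment> \<open>A point moved by \<open>S\<close> ends up strictly closer to \<open>z\<close>, so it cannot be fixed by \<open>T \<circ> S\<close>.\<close>
  have "S y = y" if "T (S y) = y" for y
  proof (rule ccontr)
    assume "S y \<noteq> y"
    then have "norm (S y - z) < norm (y - z)"
      using S unfolding strictly_quasi_nonexpansive_at_def by blast
    then show False
      using strictly_quasi_nonexpansive_atD[OF T, of "S y"] that by simp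
  qed
  then show "Fix (T \<circ> S) = Fix T \<inter> Fix S"
    unfolding Fix_def by (auto, metis)
qed

lemma strictly_quasi_nonexpansive_at_comp_chain:
  assumes "\<And>l. l \<in> {1..m} \<Longrightarrow> strictly_quasi_nonexpansive_at (T (ix l)) z"
  shows "strictly_quasi_nonexpansive_at (comp_chain T ix m) z"
  using assms
proof (induction m)
  case 0
  then show ?case
    by (simp add: strictly_quasi_nonexpansive_at_def)
next
  case (Suc m)
  show ?case
    unfolding comp_chain_Suc by (rule strictly_quasi_nonexpansive_at_comp(1)) (use Suc in auto)
qed

lemma Fix_comp_chain:
  assumes "\<And>l. l \<in> {1..m} \<Longrightarrow> strictly_quasi_nonexpansive_at (T (ix l)) z"
  shows "Fix (comp_chain T ix m) = (\<Inter>l\<in>{1..m}. Fix (T (ix l)))"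
  using assms
proof (induction m)
  case 0
  then show ?case
    by (simp add: Fix_def)
next
  case (Suc m)
  have "Fix (comp_chain T ix (Suc m)) = Fix (comp_chain T ix m) \<inter> Fix (T (ix (Suc m)))"
    unfolding comp_chain_Suc
    by (rule strictly_quasi_nonexpansive_at_comp(2))
      (use Suc.prems strictly_quasi_nonexpansive_at_comp_chain[of m T ix z] in auto)
  also have "\<dots> = (\<Inter>l\<in>{1..Suc m}. Fix (T (ix l)))"
    using Suc by (auto simp: atLeastAtMostSuc_conv)
  finally show ?case .
qed

lemma Fix_convex_combination:
  fixes C :: "'k \<Rightarrow> 'a::real_normed_vector \<Rightarrow> 'a"
  assumes "finite K" and pos: "\<And>k. k \<in> K \<Longrightarrow> 0 < \<omega> k" and "sum \<omega> K = 1"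
    and sqn: "\<And>k. k \<in> K \<Longrightarrow> strictly_quasi_nonexpansive_at (C k) z"
  shows "Fix (\<lambda>x. \<Sum>k\<in>K. \<omega> k *\<^sub>R C k x) = (\<Inter>k\<in>K. Fix (C k))"
proof (intro equalityI subsetI)
  fix y
  assume "y \<in> (\<Inter>k\<in>K. Fix (C k))"
  then have "(\<Sum>k\<in>K. \<omega> k *\<^sub>R C k y) = (\<Sum>k\<in>K. \<omega> k *\<^sub>R y)"
    by (simp add: Fix_def)
  also have "\<dots> = y"
    using \<open>sum \<omega> K = 1\<close> by (simp add: scaleR_sum_left[symmetric])
  finally show "y \<in> Fix (\<lambda>x. \<Sum>k\<in>K. \<omega> k *\<^sub>R C k x)"
    by (simp add: Fix_def)
next
  fix y
  assume "y \<in> Fix (\<lambda>x. \<Sum>k\<in>K. \<omega> k *\<^sub>R C k x)"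
  then have fixed: "(\<Sum>k\<in>K. \<omega> k *\<^sub>R C k y) = y"
    by (simp add: Fix_def)
  \<comment> \<open>Otherwise \<open>y\<close> would be a strict convex combination of points strictly closer to \<open>z\<close>.\<close>
  show "y \<in> (\<Inter>k\<in>K. Fix (C k))"
  proof (rule ccontr)
    assume "y \<notin> (\<Inter>k\<in>K. Fix (C k))"
    then obtain k0 where "k0 \<in> K" "C k0 y \<noteq> y"
      by (auto simp: Fix_def)
    have "(\<Sum>k\<in>K. \<omega> k *\<^sub>R z) = z"
      using \<open>sum \<omega> K = 1\<close> by (simp add: scaleR_sum_left[symmetric])
    then have "y - z = (\<Sum>k\<in>K. \<omega> k *\<^sub>R (C k y - z))"
      using fixed by (simp add: scaleR_diff_right sum_subtractf)
    then have "norm (y - z) \<le> (\<Sum>k\<in>K. \<omega> k * norm (C k y - z))"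
      using norm_sum[of "\<lambda>k. \<omega> k *\<^sub>R (C k y - z)" K] pos by (simp add: less_imp_le)
    also have "\<dots> < (\<Sum>k\<in>K. \<omega> k * norm (y - z))"
    proof (rule sum_strict_mono_ex1)
      show "\<forall>k\<in>K. \<omega> k * norm (C k y - z) \<le> \<omega> k * norm (y - z)"
      proof
        fix k
        assume "k \<in> K"
        then show "\<omega> k * norm (C k y - z) \<le> \<omega> k * norm (y - z)"
          using strictly_quasi_nonexpansive_atD[OF sqn] pos[of k] by (simp add: mult_left_mono)
      qed
      show "\<exists>k\<in>K. \<omega> k * norm (C k y - z) < \<omega> k * norm (y - z)"
        using \<open>k0 \<in> K\<close> \<open>C k0 y \<noteq> y\<close> pos sqn unfolding strictly_quasi_nonexpansive_at_def by auto
    qed (rule \<open>finite K\<close>)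
    also have "\<dots> = norm (y - z)"
      using \<open>sum \<omega> K = 1\<close> by (simp add: sum_distrib_right[symmetric])
    finally show False
      by simp
  qed
qed

section \<open>Weak compactness in Hilbert spaces\<close>

lemma closed_convex_nearest_point:
  fixes S :: "'a::{real_inner,complete_space} set"
  assumes "closed S" and "convex S" and "S \<noteq> {}"
  shows "\<exists>p\<in>S. \<forall>u\<in>S. norm (y - p) \<le> norm (y - u)"
proof -
  define d where "d = Inf ((\<lambda>u. (norm (y - u))\<^sup>2) ` S)"
  have d_le: "d \<le> (norm (y - u))\<^sup>2" if "u \<in> S" for u
    unfolding d_def using that by (intro cInf_lower bdd_belowI[of _ 0]) auto
  have "\<exists>c. c \<in> S \<and> (norm (y - c))\<^sup>2 < d + inverse (real (Suc n))" for n
    using cInf_lessD[of "(\<lambda>u. (norm (y - u))\<^sup>2) ` S" "d + inverse (real (Suc n))"] \<open>S \<noteq> {}\<close>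
    unfolding d_def by auto
  then obtain c where c_in: "\<And>n. c n \<in> S"
    and c_near: "\<And>n. (norm (y - c n))\<^sup>2 < d + inverse (real (Suc n))"
    by metis
  \<comment> \<open>By the parallelogram law, the midpoint of two almost nearest points is too far from \<open>y\<close>
      unless the two points are close to each other.\<close>
  have c_close: "(norm (c m - c n))\<^sup>2 \<le> 2 * inverse (real (Suc m)) + 2 * inverse (real (Suc n))"
    for m n
  proof -
    have "(1/2) *\<^sub>R c m + (1/2) *\<^sub>R c n \<in> S"
      using c_in \<open>convex S\<close> by (intro convexD) auto
    then have "4 * d \<le> 4 * (norm (y - ((1/2) *\<^sub>R c m + (1/2) *\<^sub>R c n)))\<^sup>2"
      using d_le by simp
    also have "\<dots> = 2 * (norm (y - c m))\<^sup>2 + 2 * (norm (y - c n))\<^sup>2 - (norm (c m - c n))\<^sup>2"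
      unfolding power2_norm_eq_inner
      by (simp add: inner_diff_left inner_diff_right inner_add_left inner_add_right
          inner_commute algebra_simps)
    finally show ?thesis using c_near[of m] c_near[of n] by linarith
  qed
  have "Cauchy c"
    unfolding Cauchy_def
  proof (intro allI impI)
    fix e :: real
    assume "0 < e"
    then obtain N :: nat where N: "0 < N" "inverse (real N) < e\<^sup>2 / 4"
      using ex_inverse_of_nat_less[of "e\<^sup>2 / 4"] by auto
    have "dist (c m) (c n) < e" if "N \<le> m" "N \<le> n" for m n
    proof -
      have "inverse (real (Suc m)) \<le> inverse (real N)" "inverse (real (Suc n)) \<le> inverse (real N)"
        using that N by (simp_all add: le_imp_inverse_le)
      then have "(norm (c m - c n))\<^sup>2 < e\<^sup>2"
        using c_close[of m n] N by linarith
      then show ?thesis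
        using \<open>0 < e\<close> by (simp add: dist_norm power_less_imp_less_base)
    qed
    then show "\<exists>M. \<forall>m\<ge>M. \<forall>n\<ge>M. dist (c m) (c n) < e" by blast
  qed
  then obtain p where p: "c \<longlonglongrightarrow> p"
    using Cauchy_convergent_iff convergent_def by blast
  have "p \<in> S"
    using closed_sequentially[OF \<open>closed S\<close> c_in p] .
  have "(norm (y - p))\<^sup>2 \<le> d + 0"
  proof (rule LIMSEQ_le)
    show "(\<lambda>n. (norm (y - c n))\<^sup>2) \<longlonglongrightarrow> (norm (y - p))\<^sup>2"
      by (intro tendsto_intros p)
    show "(\<lambda>n. d + inverse (real (Suc n))) \<longlonglongrightarrow> d + 0"
      by (intro tendsto_intros LIMSEQ_inverse_real_of_nat)
  qed (use c_near less_imp_le in blast)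
  have "norm (y - p) \<le> norm (y - u)" if "u \<in> S" for u
  proof -
    have "(norm (y - p))\<^sup>2 \<le> (norm (y - u))\<^sup>2"
      using \<open>(norm (y - p))\<^sup>2 \<le> d + 0\<close> d_le[OF that] by linarith
    then show ?thesis by (rule power2_le_imp_le) simp
  qed
  then show ?thesis
    using \<open>p \<in> S\<close> by blast
qed

lemma nearest_point_subspace_orthogonal:
  fixes y p :: "'a::real_inner"
  assumes "subspace S" and "p \<in> S"
    and nearest: "\<And>u. u \<in> S \<Longrightarrow> norm (y - p) \<le> norm (y - u)"
    and "v \<in> S"
  shows "inner (y - p) v = 0"
proof -
  define b where "b = inner (y - p) v"
  define N where "N = (norm v)\<^sup>2"
  define t where "t = b / (N + 1)"
  have "N \<ge> 0" "N + 1 > 0" by (simp_all add: N_def add_nonneg_pos)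
  have "p + t *\<^sub>R v \<in> S"
    using assms by (simp add: subspace_add subspace_scale)
  then have "(norm (y - p))\<^sup>2 \<le> (norm ((y - p) - t *\<^sub>R v))\<^sup>2"
    using nearest by (simp add: algebra_simps)
  also have "\<dots> = (norm (y - p))\<^sup>2 - 2 * t * b + t\<^sup>2 * N"
    unfolding b_def N_def power2_norm_eq_inner
    by (simp add: inner_diff_left inner_diff_right inner_commute algebra_simps power2_eq_square)
  also have "\<dots> = (norm (y - p))\<^sup>2 - t\<^sup>2 * (N + 2)"
  proof -
    have "b = t * (N + 1)"
      using \<open>N + 1 > 0\<close> by (simp add: t_def)
    then show ?thesis by (simp add: algebra_simps power2_eq_square)
  qed
  finally have "t\<^sup>2 * (N + 2) \<le> 0" by simp
  then have "t = 0"
    using \<open>N \<ge> 0\<close> by (simp add: mult_le_0_iff)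
  then show ?thesis
    using \<open>N \<ge> 0\<close> by (simp add: t_def b_def add_nonneg_eq_0_iff)
qed

lemma orthogonal_projection_exists:
  fixes S :: "'a::{real_inner,complete_space} set"
  assumes "closed S" and "subspace S"
  shows "\<exists>p\<in>S. \<forall>v\<in>S. inner (y - p) v = 0"
  using closed_convex_nearest_point[OF \<open>closed S\<close> subspace_imp_convex[OF \<open>subspace S\<close>], of y]
    nearest_point_subspace_orthogonal[OF \<open>subspace S\<close>] subspace_0[OF \<open>subspace S\<close>]
  by blast

lemma riesz_representation:
  fixes f :: "'a::{real_inner,complete_space} \<Rightarrow> real"
  assumes "bounded_linear f"
  shows "\<exists>w. \<forall>y. f y = inner w y"
proof (cases "\<forall>u. f u = 0")
  case True
  then show ?thesis by (intro exI[of _ 0]) simp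
next
  case False
  then obtain u where "f u \<noteq> 0" by blast
  have lin: "linear f"
    using assms by (rule bounded_linear.linear)
  have "closed {v. f v = 0}"
    using assms by (intro closed_Collect_eq continuous_intros)
      (auto intro: bounded_linear.continuous_on)
  moreover have "subspace {v. f v = 0}"
    using lin by (rule linear_subspace_kernel)
  ultimately obtain p where "f p = 0" and p_orth: "\<And>v. f v = 0 \<Longrightarrow> inner (u - p) v = 0"
    using orthogonal_projection_exists[of _ u] by blast
  define y0 where "y0 = u - p"
  have "f y0 = f u"
    using \<open>f p = 0\<close> linear_diff[OF lin] by (simp add: y0_def)
  then have "y0 \<noteq> 0"
    using \<open>f u \<noteq> 0\<close> linear_0[OF lin] by auto
  \<comment> \<open>\<open>y0\<close> is orthogonal to the kernel of \<open>f\<close>, and \<open>y - (f y / f y0) y0\<close> lies in that kernel.\<close>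
  have "f y = inner ((f y0 / inner y0 y0) *\<^sub>R y0) y" for y
  proof -
    have "f (y - (f y / f y0) *\<^sub>R y0) = 0"
      using \<open>f y0 = f u\<close> \<open>f u \<noteq> 0\<close> by (simp add: linear_diff[OF lin] linear_scale[OF lin])
    then have "inner y0 (y - (f y / f y0) *\<^sub>R y0) = 0"
      using p_orth by (simp add: y0_def)
    then show ?thesis
      using \<open>y0 \<noteq> 0\<close> \<open>f y0 = f u\<close> \<open>f u \<noteq> 0\<close> by (simp add: inner_diff_right field_simps)
  qed
  then show ?thesis by blast
qed

lemma abs_inner_le_bound:
  fixes u v :: "'a::real_inner"
  assumes "norm u \<le> B"
  shows "\<bar>inner u v\<bar> \<le> B * norm v"
  using Cauchy_Schwarz_ineq2[of u v] assms mult_right_mono[OF assms norm_ge_zero[of v]]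
  by linarith

lemma bounded_seq_inner_convergent_subseq:
  fixes x :: "nat \<Rightarrow> 'a::real_inner"
  assumes bound: "\<And>n. norm (x n) \<le> B"
  shows "\<exists>r. strict_mono r \<and> (\<forall>k. convergent (\<lambda>j. inner (x (r j)) (x k)))"
proof -
  define P where "P k s \<longleftrightarrow> convergent (\<lambda>j. inner (x (s j)) (x k))" for k and s :: "nat \<Rightarrow> nat"
  interpret subseqs P
  proof
    fix k and s :: "nat \<Rightarrow> nat"
    have "0 \<le> B"
      using order_trans[OF norm_ge_zero bound] .
    have "\<bar>inner (x (s j)) (x k)\<bar> \<le> B * B" for j
      using abs_inner_le_bound[OF bound, of "s j" "x k"] mult_left_mono[OF bound \<open>0 \<le> B\<close>, of k]
      by linarith
    then have "bounded (range (\<lambda>j. inner (x (s j)) (x k)))"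
      by (intro boundedI[of _ "B * B"]) auto
    then obtain l r where "strict_mono r" "((\<lambda>j. inner (x (s j)) (x k)) \<circ> r) \<longlonglongrightarrow> l"
      using bounded_imp_convergent_subsequence by blast
    then show "\<exists>r. strict_mono r \<and> P k (s \<circ> r)"
      unfolding P_def convergent_def by (auto simp: o_def)
  qed
  have "convergent (\<lambda>j. inner (x (diagseq j)) (x k))" for k
  proof -
    have "P k (diagseq \<circ> (+) (Suc k))"
    proof (rule diagseq_holds)
      fix r s n
      assume "strict_mono (r :: nat \<Rightarrow> nat)" "P n s"
      then obtain l where "(\<lambda>j. inner (x (s j)) (x n)) \<longlonglongrightarrow> l"
        unfolding P_def convergent_def by blast
      from LIMSEQ_subseq_LIMSEQ[OF this \<open>strict_mono r\<close>]
      show "P n (s \<circ> r)"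
        unfolding P_def convergent_def by (auto simp: o_def)
    qed
    then obtain l where "(\<lambda>j. inner (x (diagseq (j + Suc k))) (x k)) \<longlonglongrightarrow> l"
      unfolding P_def convergent_def by (auto simp: o_def add.commute)
    then show ?thesis
      unfolding convergent_def by (blast intro: LIMSEQ_offset)
  qed
  then show ?thesis
    using subseq_diagseq by blast
qed

lemma closed_inner_convergent:
  fixes x :: "nat \<Rightarrow> 'a::real_inner"
  assumes bound: "\<And>n. norm (x n) \<le> B"
  shows "closed {v. convergent (\<lambda>n. inner (x n) v)}"
  unfolding closed_sequential_limits
proof (intro allI impI, elim conjE)
  fix v :: "nat \<Rightarrow> 'a" and l
  assume v: "\<forall>k. v k \<in> {v. convergent (\<lambda>n. inner (x n) v)}" and "v \<longlonglongrightarrow> l"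
  have "Cauchy (\<lambda>n. inner (x n) l)"
    unfolding Cauchy_def
  proof (intro allI impI)
    fix e :: real
    assume "0 < e"
    have "(\<lambda>k. B * norm (v k - l)) \<longlonglongrightarrow> 0"
      using \<open>v \<longlonglongrightarrow> l\<close> by (intro tendsto_mult_right_zero tendsto_norm_zero LIM_zero)
    moreover have "0 < e / 3"
      using \<open>0 < e\<close> by simp
    ultimately obtain k where "norm (B * norm (v k - l) - 0) < e / 3"
      using LIMSEQ_D by blast
    then have k: "B * norm (l - v k) < e / 3"
      by (simp add: norm_minus_commute)
    have "Cauchy (\<lambda>n. inner (x n) (v k))"
      using v by (simp add: Cauchy_convergent_iff)
    then obtain M where M: "\<And>i j. M \<le> i \<Longrightarrow> M \<le> j \<Longrightarrow> dist (inner (x i) (v k)) (inner (x j) (v k)) < e / 3"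
      using \<open>0 < e / 3\<close> unfolding Cauchy_def by blast
    \<comment> \<open>The \<open>\<epsilon>/3\<close> argument: \<open>inner (x n) l\<close> is uniformly close to \<open>inner (x n) (v k)\<close>.\<close>
    have "dist (inner (x i) l) (inner (x j) l) < e" if "M \<le> i" "M \<le> j" for i j
    proof -
      have "inner (x i) l - inner (x j) l = inner (x i) (l - v k)
          + (inner (x i) (v k) - inner (x j) (v k)) - inner (x j) (l - v k)"
        by (simp add: inner_diff_right)
      moreover have "\<bar>inner (x i) (l - v k)\<bar> < e / 3" "\<bar>inner (x j) (l - v k)\<bar> < e / 3"
        using abs_inner_le_bound[OF bound, of i "l - v k"] abs_inner_le_bound[OF bound, of j "l - v k"] k
        by linarith+
      moreover have "\<bar>inner (x i) (v k) - inner (x j) (v k)\<bar> < e / 3"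
        using M[OF that] by (simp add: dist_real_def)
      ultimately show ?thesis
        unfolding dist_real_def by linarith
    qed
    then show "\<exists>M. \<forall>i\<ge>M. \<forall>j\<ge>M. dist (inner (x i) l) (inner (x j) l) < e" by blast
  qed
  then show "l \<in> {v. convergent (\<lambda>n. inner (x n) v)}"
    by (simp add: Cauchy_convergent_iff)
qed

lemma weakly_converges_if_inner_convergent:
  fixes x :: "nat \<Rightarrow> 'a::{real_inner,complete_space}"
  assumes bound: "\<And>n. norm (x n) \<le> B"
    and conv: "\<And>y. convergent (\<lambda>n. inner (x n) y)"
  shows "\<exists>w. weakly_converges x w"
proof -
  define f where "f y = lim (\<lambda>n. inner (x n) y)" for y
  have f: "(\<lambda>n. inner (x n) y) \<longlonglongrightarrow> f y" for y
    using conv convergent_LIMSEQ_iff unfolding f_def by blast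
  have "bounded_linear f"
  proof (rule bounded_linear_intro)
    show "f (u + v) = f u + f v" for u v
      using tendsto_add[OF f[of u] f[of v]] f[of "u + v"]
      by (simp add: inner_add_right LIMSEQ_unique)
    show "f (c *\<^sub>R u) = c *\<^sub>R f u" for c u
      using tendsto_mult_left[OF f[of u], of c] f[of "c *\<^sub>R u"]
      by (simp add: LIMSEQ_unique)
    show "norm (f y) \<le> norm y * B" for y
    proof (rule LIMSEQ_le_const2)
      show "(\<lambda>n. \<bar>inner (x n) y\<bar>) \<longlonglongrightarrow> norm (f y)"
        using tendsto_rabs[OF f[of y]] by simp
      show "\<exists>N. \<forall>n\<ge>N. \<bar>inner (x n) y\<bar> \<le> norm y * B"
        using abs_inner_le_bound[OF bound] by (simp add: mult.commute)
    qed
  qed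
  then obtain w where "\<And>y. f y = inner w y"
    using riesz_representation by blast
  then show ?thesis
    using f unfolding weakly_converges_def by metis
qed

lemma bounded_seq_weakly_convergent_subseq:
  fixes x :: "nat \<Rightarrow> 'a::{real_inner,complete_space}"
  assumes bound: "\<And>n. norm (x n) \<le> B"
  shows "\<exists>r w. strict_mono r \<and> weakly_converges (x \<circ> r) w"
proof -
  obtain r where "strict_mono r" and conv_x: "\<And>k. convergent (\<lambda>j. inner (x (r j)) (x k))"
    using bounded_seq_inner_convergent_subseq[of x B, OF bound] by blast
  define S where "S = {v. convergent (\<lambda>j. inner (x (r j)) v)}"
  have "closed S"
    unfolding S_def using closed_inner_convergent[of "x \<circ> r" B] bound by simp
  moreover have "subspace S"
    unfolding subspace_def S_def
    by (auto simp: inner_add_right intro: convergent_const convergent_add convergent_mult[OF convergent_const])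
  \<comment> \<open>The closed subspace \<open>S\<close> contains every \<open>x k\<close>, so the component of \<open>y\<close> orthogonal to \<open>S\<close>
      does not contribute to \<open>inner (x (r j)) y\<close>.\<close>
  moreover have "convergent (\<lambda>j. inner (x (r j)) y)" for y
  proof -
    obtain p where "p \<in> S" and p: "\<And>v. v \<in> S \<Longrightarrow> inner (y - p) v = 0"
      using orthogonal_projection_exists[OF \<open>closed S\<close> \<open>subspace S\<close>] by blast
    have "inner (x (r j)) y = inner (x (r j)) p" for j
      using p[of "x (r j)"] conv_x by (simp add: S_def inner_diff_left inner_commute)
    then show ?thesis
      using \<open>p \<in> S\<close> by (simp add: S_def)
  qed
  ultimately obtain w where "weakly_converges (x \<circ> r) w"
    using weakly_converges_if_inner_convergent[of "x \<circ> r" B] bound by auto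
  then show ?thesis
    using \<open>strict_mono r\<close> by blast
qed

lemma weakly_converges_inner_diff_tendsto_zero:
  assumes "weakly_converges x w"
  shows "(\<lambda>n. inner (x n - w) v) \<longlonglongrightarrow> 0"
  using assms tendsto_diff[OF _ tendsto_const, of "\<lambda>n. inner (x n) v" "inner w v" _ "inner w v"]
  unfolding weakly_converges_def by (simp add: inner_diff_left)

lemma weakly_converges_if_unique_weak_cluster_point:
  fixes x :: "nat \<Rightarrow> 'a::{real_inner,complete_space}"
  assumes bound: "\<And>n. norm (x n) \<le> B"
    and unique: "\<And>s w'. strict_mono s \<Longrightarrow> weakly_converges (x \<circ> s) w' \<Longrightarrow> w' = w"
  shows "weakly_converges x w"
  unfolding weakly_converges_def
proof (rule allI, rule ccontr)
  fix y
  assume "\<not> (\<lambda>n. inner (x n) y) \<longlonglongrightarrow> inner w y"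
  then obtain e where "0 < e" and far: "\<And>N. \<exists>n\<ge>N. e \<le> \<bar>inner (x n) y - inner w y\<bar>"
    unfolding LIMSEQ_iff by (auto simp: not_less)
  have "infinite {n. e \<le> \<bar>inner (x n) y - inner w y\<bar>}"
    unfolding infinite_nat_iff_unbounded_le using far by blast
  then obtain t :: "nat \<Rightarrow> nat" where "strict_mono t" and t: "\<And>n. e \<le> \<bar>inner (x (t n)) y - inner w y\<bar>"
    using infinite_enumerate by blast
  obtain t' w' where "strict_mono t'" and "weakly_converges ((x \<circ> t) \<circ> t') w'"
    using bounded_seq_weakly_convergent_subseq[of "x \<circ> t" B] bound by auto
  moreover have "strict_mono (t \<circ> t')"
    using \<open>strict_mono t\<close> \<open>strict_mono t'\<close> by (rule strict_mono_o)
  ultimately have "weakly_converges (x \<circ> (t \<circ> t')) w"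
    using unique[of "t \<circ> t'" w'] by (simp add: o_assoc)
  then have "(\<lambda>j. inner (x (t (t' j))) y) \<longlonglongrightarrow> inner w y"
    unfolding weakly_converges_def by (simp add: o_def)
  then have "(\<lambda>j. \<bar>inner (x (t (t' j))) y - inner w y\<bar>) \<longlonglongrightarrow> \<bar>inner w y - inner w y\<bar>"
    by (intro tendsto_rabs tendsto_diff tendsto_const)
  then have "e \<le> 0"
    using t by (intro LIMSEQ_le_const) auto
  then show False
    using \<open>0 < e\<close> by simp
qed

section \<open>Fejer monotone sequences\<close>

lemma weak_cluster_point_norm_limit:
  fixes x :: "nat \<Rightarrow> 'a::real_inner"
  assumes "strict_mono s" and weak: "weakly_converges (x \<circ> s) w1"
    and L1: "(\<lambda>n. (norm (x n - w1))\<^sup>2) \<longlonglongrightarrow> L1"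
    and L2: "(\<lambda>n. (norm (x n - w2))\<^sup>2) \<longlonglongrightarrow> L2"
  shows "L2 = L1 + (norm (w1 - w2))\<^sup>2"
proof -
  have expand: "(norm (x (s j) - w2))\<^sup>2
      = (norm (x (s j) - w1))\<^sup>2 + 2 * inner (x (s j) - w1) (w1 - w2) + (norm (w1 - w2))\<^sup>2" for j
    unfolding power2_norm_eq_inner
    by (simp add: inner_diff_left inner_diff_right inner_commute algebra_simps)
  have L1_subseq: "(\<lambda>j. (norm (x (s j) - w1))\<^sup>2) \<longlonglongrightarrow> L1"
    using LIMSEQ_subseq_LIMSEQ[OF L1 \<open>strict_mono s\<close>] by (simp add: o_def)
  have inner_zero: "(\<lambda>j. inner (x (s j) - w1) (w1 - w2)) \<longlonglongrightarrow> 0"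
    using weakly_converges_inner_diff_tendsto_zero[OF weak, of "w1 - w2"] unfolding o_def .
  have "(\<lambda>j. (norm (x (s j) - w2))\<^sup>2) \<longlonglongrightarrow> L1 + 2 * 0 + (norm (w1 - w2))\<^sup>2"
    unfolding expand
    by (rule tendsto_add[OF tendsto_add[OF L1_subseq tendsto_mult_left[OF inner_zero]] tendsto_const])
  moreover have "(\<lambda>j. (norm (x (s j) - w2))\<^sup>2) \<longlonglongrightarrow> L2"
    using LIMSEQ_subseq_LIMSEQ[OF L2 \<open>strict_mono s\<close>] by (simp add: o_def)
  ultimately have "L2 = L1 + 2 * 0 + (norm (w1 - w2))\<^sup>2"
    using LIMSEQ_unique by blast
  then show ?thesis
    by simp
qed

lemma fejer_monotone_bounded:
  fixes x :: "nat \<Rightarrow> 'a::real_normed_vector"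
  assumes "\<And>n. norm (x (Suc n) - z) \<le> norm (x n - z)"
  shows "norm (x n) \<le> norm (x 0 - z) + norm z"
proof -
  have "decseq (\<lambda>n. norm (x n - z))"
    using assms by (rule decseq_SucI)
  then have "norm (x n - z) \<le> norm (x 0 - z)"
    using decseqD[of _ 0 n] by simp
  then show ?thesis
    using norm_triangle_ineq[of "x n - z" z] by simp
qed

lemma fejer_monotone_weakly_converges:
  fixes x :: "nat \<Rightarrow> 'a::{real_inner,complete_space}"
  assumes "F \<noteq> {}"
    and fejer: "\<And>z n. z \<in> F \<Longrightarrow> norm (x (Suc n) - z) \<le> norm (x n - z)"
    and cluster: "\<And>s w. strict_mono s \<Longrightarrow> weakly_converges (x \<circ> s) w \<Longrightarrow> w \<in> F"
  shows "\<exists>w\<in>F. weakly_converges x w"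
proof -
  obtain z where "z \<in> F"
    using \<open>F \<noteq> {}\<close> by blast
  have bound: "norm (x n) \<le> norm (x 0 - z) + norm z" for n
    using fejer[OF \<open>z \<in> F\<close>] by (rule fejer_monotone_bounded)
  obtain s w where "strict_mono s" and "weakly_converges (x \<circ> s) w"
    using bounded_seq_weakly_convergent_subseq[of x, OF bound] by blast
  have dist_converges: "\<exists>L. (\<lambda>n. (norm (x n - u))\<^sup>2) \<longlonglongrightarrow> L" if "u \<in> F" for u
  proof -
    have "decseq (\<lambda>n. (norm (x n - u))\<^sup>2)"
      using fejer[OF that] by (intro decseq_SucI power_mono) simp_all
    then show ?thesis
      using decseq_convergent[of "\<lambda>n. (norm (x n - u))\<^sup>2" 0] by auto
  qed
  \<comment> \<open>Opial's argument: the squared distances to two weak cluster points \<open>w\<close>, \<open>w'\<close> in \<open>F\<close>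
      converge, and each limit exceeds the other by \<open>\<parallel>w - w'\<parallel>\<^sup>2\<close>.\<close>
  have "w' = w" if s': "strict_mono s'" and w': "weakly_converges (x \<circ> s') w'" for s' w'
  proof -
    have "w \<in> F" "w' \<in> F"
      using cluster \<open>strict_mono s\<close> \<open>weakly_converges (x \<circ> s) w\<close> s' w' by blast+
    then obtain L1 L2 where L1: "(\<lambda>n. (norm (x n - w))\<^sup>2) \<longlonglongrightarrow> L1"
      and L2: "(\<lambda>n. (norm (x n - w'))\<^sup>2) \<longlonglongrightarrow> L2"
      using dist_converges by blast
    have "L2 = L1 + (norm (w - w'))\<^sup>2"
      using \<open>strict_mono s\<close> \<open>weakly_converges (x \<circ> s) w\<close> L1 L2 by (rule weak_cluster_point_norm_limit)
    moreover have "L1 = L2 + (norm (w' - w))\<^sup>2"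
      using s' w' L2 L1 by (rule weak_cluster_point_norm_limit)
    ultimately show ?thesis
      by (simp add: norm_minus_commute)
  qed
  then have "weakly_converges x w"
    using weakly_converges_if_unique_weak_cluster_point[of x, OF bound] by blast
  then show ?thesis
    using cluster \<open>strict_mono s\<close> \<open>weakly_converges (x \<circ> s) w\<close> by blast
qed

lemma nonexpansive_demiclosed:
  fixes R :: "'a::real_inner \<Rightarrow> 'a"
  assumes "nonexpansive R" and bound: "\<And>j. norm (a j) \<le> B"
    and weak: "weakly_converges a w"
    and residual: "(\<lambda>j. norm (a j - R (a j))) \<longlonglongrightarrow> 0"
  shows "R w = w"
proof -
  define C where "C = B + norm w"
  define D where "D = (norm (w - R w))\<^sup>2"
  \<comment> \<open>Expanding \<open>\<parallel>a j - R w\<parallel>\<^sup>2 \<le> (\<parallel>a j - R (a j)\<parallel> + \<parallel>a j - w\<parallel>)\<^sup>2\<close> around \<open>w\<close>.\<close>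
  have D_le: "D \<le> (norm (a j - R (a j)))\<^sup>2 + 2 * C * norm (a j - R (a j))
      - 2 * inner (a j - w) (w - R w)" for j
  proof -
    define d where "d = norm (a j - R (a j))"
    define r where "r = norm (a j - w)"
    have "r \<le> C"
      using norm_triangle_ineq4[of "a j" w] bound[of j] by (simp add: r_def C_def)
    have "norm (a j - R w) \<le> norm (a j - R (a j)) + norm (R (a j) - R w)"
      using norm_triangle_ineq[of "a j - R (a j)" "R (a j) - R w"] by simp
    also have "norm (R (a j) - R w) \<le> norm (a j - w)"
      using \<open>nonexpansive R\<close> unfolding nonexpansive_def by blast
    finally have "(norm (a j - R w))\<^sup>2 \<le> (d + r)\<^sup>2"
      unfolding d_def r_def by (simp add: power_mono)
    moreover have "(norm (a j - R w))\<^sup>2 = r\<^sup>2 + 2 * inner (a j - w) (w - R w) + D"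
      unfolding r_def D_def power2_norm_eq_inner
      by (simp add: inner_diff_left inner_diff_right inner_commute algebra_simps)
    moreover have "d * r \<le> d * C"
      using \<open>r \<le> C\<close> by (simp add: d_def mult_left_mono)
    ultimately show ?thesis
      unfolding d_def[symmetric] by (simp add: power2_eq_square algebra_simps)
  qed
  have "(\<lambda>j. (norm (a j - R (a j)))\<^sup>2 + 2 * C * norm (a j - R (a j))
      - 2 * inner (a j - w) (w - R w)) \<longlonglongrightarrow> 0\<^sup>2 + 2 * C * 0 - 2 * 0"
    using tendsto_diff[OF tendsto_add[OF tendsto_power[OF residual] tendsto_mult_left[OF residual]]
        tendsto_mult_left[OF weakly_converges_inner_diff_tendsto_zero[OF weak]]] .
  then have "D \<le> 0"
    using D_le by (intro LIMSEQ_le_const) auto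
  then show ?thesis
    by (simp add: D_def)
qed

section \<open>The Krasnosel'skii--Mann iteration\<close>

locale krasnoselskii_mann =
  fixes R :: "'a::{real_inner,complete_space} \<Rightarrow> 'a" and \<mu> :: "nat \<Rightarrow> real" and x :: "nat \<Rightarrow> 'a"
  assumes nonexpansive: "nonexpansive R"
    and step_size: "\<And>n. 0 < \<mu> n \<and> \<mu> n < 1"
    and divergent: "filterlim (\<lambda>N. \<Sum>n<N. \<mu> n * (1 - \<mu> n)) at_top sequentially"
    and iteration: "\<And>n. x (Suc n) = x n + \<mu> n *\<^sub>R (R (x n) - x n)"
begin

lemma step_weight_nonneg: "0 \<le> \<mu> n * (1 - \<mu> n)"
  using step_size[of n] by simp

lemma dist_fixed_point_decrease:
  assumes "z \<in> Fix R"
  shows "(norm (x (Suc n) - z))\<^sup>2 + \<mu> n * (1 - \<mu> n) * (norm (x n - R (x n)))\<^sup>2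
    \<le> (norm (x n - z))\<^sup>2"
proof -
  have step: "x (Suc n) - z = (1 - \<mu> n) *\<^sub>R (x n - z) + \<mu> n *\<^sub>R (R (x n) - z)"
    by (simp add: iteration algebra_simps)
  have "(norm (x (Suc n) - z))\<^sup>2 = (1 - \<mu> n) * (norm (x n - z))\<^sup>2
      + \<mu> n * (norm (R (x n) - z))\<^sup>2 - \<mu> n * (1 - \<mu> n) * (norm (x n - R (x n)))\<^sup>2"
    using power2_norm_convex_combination[of "\<mu> n" "x n - z" "R (x n) - z"]
    unfolding step by simp
  moreover have "R z = z"
    using assms by (simp add: Fix_def)
  then have "norm (R (x n) - z) \<le> norm (x n - z)"
    using nonexpansive unfolding nonexpansive_def by metis
  then have "\<mu> n * (norm (R (x n) - z))\<^sup>2 \<le> \<mu> n * (norm (x n - z))\<^sup>2"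
    using step_size[of n] by (simp add: power_mono)
  moreover have "(1 - \<mu> n) * (norm (x n - z))\<^sup>2 + \<mu> n * (norm (x n - z))\<^sup>2 = (norm (x n - z))\<^sup>2"
    by (simp add: algebra_simps)
  ultimately show ?thesis
    by linarith
qed

lemma fejer_monotone:
  assumes "z \<in> Fix R"
  shows "norm (x (Suc n) - z) \<le> norm (x n - z)"
proof -
  have "0 \<le> \<mu> n * (1 - \<mu> n) * (norm (x n - R (x n)))\<^sup>2"
    using step_weight_nonneg by simp
  then have "(norm (x (Suc n) - z))\<^sup>2 \<le> (norm (x n - z))\<^sup>2"
    using dist_fixed_point_decrease[OF assms, of n] by linarith
  then show ?thesis
    by (rule power2_le_imp_le) simp
qed

lemma sum_residuals_le:
  assumes "z \<in> Fix R"
  shows "(\<Sum>n<N. \<mu> n * (1 - \<mu> n) * (norm (x n - R (x n)))\<^sup>2)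
    \<le> (norm (x 0 - z))\<^sup>2 - (norm (x N - z))\<^sup>2"
proof (induction N)
  case (Suc N)
  then show ?case
    using dist_fixed_point_decrease[OF assms, of N] by simp
qed simp

lemma residual_decreasing: "norm (x (Suc n) - R (x (Suc n))) \<le> norm (x n - R (x n))"
proof -
  have "x (Suc n) - R (x (Suc n)) = (1 - \<mu> n) *\<^sub>R (x n - R (x n)) + (R (x n) - R (x (Suc n)))"
    by (simp add: iteration algebra_simps)
  then have "norm (x (Suc n) - R (x (Suc n)))
      \<le> norm ((1 - \<mu> n) *\<^sub>R (x n - R (x n))) + norm (R (x n) - R (x (Suc n)))"
    by (metis norm_triangle_ineq)
  also have "norm ((1 - \<mu> n) *\<^sub>R (x n - R (x n))) = (1 - \<mu> n) * norm (x n - R (x n))"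
    using step_size[of n] by simp
  also have "norm (R (x n) - R (x (Suc n))) \<le> norm (x n - x (Suc n))"
    using nonexpansive unfolding nonexpansive_def by blast
  also have "norm (x n - x (Suc n)) = \<mu> n * norm (x n - R (x n))"
    using step_size[of n] by (simp add: iteration norm_minus_commute)
  finally show ?thesis
    by (simp add: algebra_simps)
qed

lemma residual_tendsto_zero:
  assumes "z \<in> Fix R"
  shows "(\<lambda>n. norm (x n - R (x n))) \<longlonglongrightarrow> 0"
proof -
  define d where "d n = norm (x n - R (x n))" for n
  have "decseq d"
    unfolding d_def using residual_decreasing by (rule decseq_SucI)
  then obtain L where "d \<longlonglongrightarrow> L" and L_le: "\<And>n. L \<le> d n"
    using decseq_convergent[of d 0] by (auto simp: d_def)
  have "0 \<le> L"
    using \<open>d \<longlonglongrightarrow> L\<close> by (rule LIMSEQ_le_const) (auto simp: d_def)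
  \<comment> \<open>If \<open>L > 0\<close>, the divergence of \<open>\<Sum> \<mu> n (1 - \<mu> n)\<close> contradicts the bound on the weighted
      squared residuals.\<close>
  have "L = 0"
  proof (rule ccontr)
    assume "L \<noteq> 0"
    with \<open>0 \<le> L\<close> have "0 < L\<^sup>2"
      by simp
    define K where "K = (norm (x 0 - z))\<^sup>2"
    obtain N where N: "K / L\<^sup>2 + 1 \<le> (\<Sum>n<N. \<mu> n * (1 - \<mu> n))"
      using divergent unfolding filterlim_at_top eventually_sequentially by blast
    have "L\<^sup>2 * (\<Sum>n<N. \<mu> n * (1 - \<mu> n)) = (\<Sum>n<N. \<mu> n * (1 - \<mu> n) * L\<^sup>2)"
      by (simp add: sum_distrib_left algebra_simps)
    also have "\<dots> \<le> (\<Sum>n<N. \<mu> n * (1 - \<mu> n) * (d n)\<^sup>2)"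
      using step_weight_nonneg L_le \<open>0 \<le> L\<close> by (intro sum_mono mult_left_mono power_mono) auto
    also have "\<dots> \<le> K"
      using sum_residuals_le[OF assms, of N] zero_le_power2[of "norm (x N - z)"]
      unfolding d_def K_def by linarith
    finally have "L\<^sup>2 * (\<Sum>n<N. \<mu> n * (1 - \<mu> n)) \<le> K" .
    moreover have "L\<^sup>2 * (K / L\<^sup>2 + 1) \<le> L\<^sup>2 * (\<Sum>n<N. \<mu> n * (1 - \<mu> n))"
      using N \<open>0 < L\<^sup>2\<close> by simp
    moreover have "L\<^sup>2 * (K / L\<^sup>2 + 1) = K + L\<^sup>2"
      using \<open>0 < L\<^sup>2\<close> by (simp add: field_simps)
    ultimately show False
      using \<open>0 < L\<^sup>2\<close> by linarith
  qed
  with \<open>d \<longlonglongrightarrow> L\<close> have "d \<longlonglongrightarrow> 0"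
    by simp
  then show ?thesis
    unfolding d_def[abs_def] .
qed

theorem weakly_converges_to_fixed_point:
  assumes "Fix R \<noteq> {}"
  shows "\<exists>w\<in>Fix R. weakly_converges x w"
  using assms
proof (rule fejer_monotone_weakly_converges)
  show "norm (x (Suc n) - z) \<le> norm (x n - z)" if "z \<in> Fix R" for z n
    using that by (rule fejer_monotone)
  show "w \<in> Fix R" if "strict_mono s" and "weakly_converges (x \<circ> s) w" for s w
  proof -
    obtain z where "z \<in> Fix R"
      using assms by blast
    have bound: "norm ((x \<circ> s) j) \<le> norm (x 0 - z) + norm z" for j
      using fejer_monotone_bounded[of x z, OF fejer_monotone[OF \<open>z \<in> Fix R\<close>]] by simp
    have residual: "(\<lambda>j. norm ((x \<circ> s) j - R ((x \<circ> s) j))) \<longlonglongrightarrow> 0"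
      using LIMSEQ_subseq_LIMSEQ[OF residual_tendsto_zero[OF \<open>z \<in> Fix R\<close>] \<open>strict_mono s\<close>]
      unfolding comp_def .
    have "R w = w"
      using nonexpansive bound \<open>weakly_converges (x \<circ> s) w\<close> residual by (rule nonexpansive_demiclosed)
    then show ?thesis
      by (simp add: Fix_def)
  qed
qed

end

theorem averaged_relaxation_weakly_converges:
  fixes T :: "'a::{real_inner,complete_space} \<Rightarrow> 'a"
  assumes "averaged \<alpha> T" and "Fix T \<noteq> {}"
    and relaxation: "\<And>n. 0 < lam n \<and> lam n < 1 / \<alpha>"
    and divergent: "filterlim (\<lambda>N. \<Sum>n<N. lam n * (1 / \<alpha> - lam n)) at_top sequentially"
    and iteration: "\<And>n. x (Suc n) = x n + lam n *\<^sub>R (T (x n) - x n)"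
  shows "\<exists>w\<in>Fix T. weakly_converges x w"
proof -
  obtain R where "nonexpansive R" and T: "T = (\<lambda>x. (1 - \<alpha>) *\<^sub>R x + \<alpha> *\<^sub>R R x)"
    and "0 < \<alpha>" "\<alpha> < 1"
    using assms(1) unfolding averaged_def by blast
  have displacement: "T y - y = \<alpha> *\<^sub>R (R y - y)" for y
    by (simp add: T algebra_simps)
  have "Fix R = Fix T"
    unfolding Fix_def using displacement \<open>0 < \<alpha>\<close> by (metis eq_iff_diff_eq_0 scaleR_eq_0_iff less_irrefl)
  \<comment> \<open>In terms of \<open>R\<close>, the iteration is the Krasnosel'skii--Mann iteration with steps \<open>\<alpha> lam n\<close>.\<close>
  define \<mu> where "\<mu> n = \<alpha> * lam n" for n
  interpret krasnoselskii_mann R \<mu> x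
  proof
    show "nonexpansive R"
      by fact
    show "0 < \<mu> n \<and> \<mu> n < 1" for n
      using relaxation[of n] \<open>0 < \<alpha>\<close> by (simp add: \<mu>_def field_simps)
    have "\<mu> n * (1 - \<mu> n) = \<alpha>\<^sup>2 * (lam n * (1 / \<alpha> - lam n))" for n
      using \<open>0 < \<alpha>\<close> by (simp add: \<mu>_def field_simps power2_eq_square)
    then have "(\<Sum>n<N. \<mu> n * (1 - \<mu> n)) = \<alpha>\<^sup>2 * (\<Sum>n<N. lam n * (1 / \<alpha> - lam n))" for N
      by (simp add: sum_distrib_left)
    then show "filterlim (\<lambda>N. \<Sum>n<N. \<mu> n * (1 - \<mu> n)) at_top sequentially"
      using filterlim_tendsto_pos_mult_at_top[OF tendsto_const _ divergent, of "\<alpha>\<^sup>2"] \<open>0 < \<alpha>\<close>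
      by simp
    show "x (Suc n) = x n + \<mu> n *\<^sub>R (R (x n) - x n)" for n
      using iteration[of n] by (simp add: displacement \<mu>_def)
  qed
  show ?thesis
    using weakly_converges_to_fixed_point \<open>Fix R = Fix T\<close> \<open>Fix T \<noteq> {}\<close> by simp
qed

lemma averaged_sum_comp_chains:
  fixes T :: "'i \<Rightarrow> 'a::real_inner \<Rightarrow> 'a"
  assumes "finite K" and "K \<noteq> {}" and m: "\<And>k. k \<in> K \<Longrightarrow> 0 < m k"
    and pos: "\<And>k. k \<in> K \<Longrightarrow> 0 < \<omega> k" and "sum \<omega> K = 1"
    and avg: "\<And>k l. k \<in> K \<Longrightarrow> l \<in> {1..m k} \<Longrightarrow> averaged (a (idx k l)) (T (idx k l))"
  shows "averaged (\<Sum>k\<in>K. \<omega> k / (1 + 1 / (\<Sum>i=1..m k. a (idx k i) / (1 - a (idx k i)))))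
    (\<lambda>x. \<Sum>k\<in>K. \<omega> k *\<^sub>R comp_chain T (idx k) (m k) x)"
proof -
  define s where "s k = (\<Sum>i=1..m k. a (idx k i) / (1 - a (idx k i)))" for k
  have s_pos: "0 < s k" if "k \<in> K" for k
  proof -
    have "{1..m k} \<noteq> {}"
      using m[OF that] by simp
    then show ?thesis
      unfolding s_def using averaged_bounds[OF avg[OF that]] by (intro sum_pos) auto
  qed
  have "\<omega> k / (1 + 1 / s k) = \<omega> k * (s k / (1 + s k))" if "k \<in> K" for k
    using s_pos[OF that] by (simp add: field_simps)
  then have "(\<Sum>k\<in>K. \<omega> k / (1 + 1 / s k)) = (\<Sum>k\<in>K. \<omega> k * (s k / (1 + s k)))"
    by (rule sum.cong[OF refl])
  moreover have "averaged (s k / (1 + s k)) (comp_chain T (idx k) (m k))" if "k \<in> K" for k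
    unfolding s_def using m avg that by (intro averaged_comp_chain) auto
  then have "averaged (\<Sum>k\<in>K. \<omega> k * (s k / (1 + s k)))
      (\<lambda>x. \<Sum>k\<in>K. \<omega> k *\<^sub>R comp_chain T (idx k) (m k) x)"
    using assms by (intro averaged_convex_combination) auto
  ultimately show ?thesis
    by (simp add: s_def)
qed

lemma Fix_sum_comp_chains:
  fixes T :: "'i \<Rightarrow> 'a::real_inner \<Rightarrow> 'a"
  assumes "finite K" and pos: "\<And>k. k \<in> K \<Longrightarrow> 0 < \<omega> k" and "sum \<omega> K = 1"
    and avg: "\<And>k l. k \<in> K \<Longrightarrow> l \<in> {1..m k} \<Longrightarrow> averaged (a (idx k l)) (T (idx k l))"
    and fixed: "\<And>k l. k \<in> K \<Longrightarrow> l \<in> {1..m k} \<Longrightarrow> T (idx k l) z = z"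
  shows "Fix (\<lambda>x. \<Sum>k\<in>K. \<omega> k *\<^sub>R comp_chain T (idx k) (m k) x)
    = (\<Inter>k\<in>K. \<Inter>l\<in>{1..m k}. Fix (T (idx k l)))"
proof -
  have sqn: "strictly_quasi_nonexpansive_at (T (idx k l)) z" if "k \<in> K" "l \<in> {1..m k}" for k l
    using averaged_imp_strictly_quasi_nonexpansive_at[OF avg[OF that]] fixed[OF that]
    by (simp add: Fix_def)
  have "Fix (\<lambda>x. \<Sum>k\<in>K. \<omega> k *\<^sub>R comp_chain T (idx k) (m k) x)
      = (\<Inter>k\<in>K. Fix (comp_chain T (idx k) (m k)))"
    using assms sqn
    by (intro Fix_convex_combination[where z = z] strictly_quasi_nonexpansive_at_comp_chain) auto
  also have "\<dots> = (\<Inter>k\<in>K. \<Inter>l\<in>{1..m k}. Fix (T (idx k l)))"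
    using sqn Fix_comp_chain by (metis (no_types, lifting) INF_cong)
  finally show ?thesis .
qed

theorem proposition3p1:
  fixes T :: "'i \<Rightarrow> 'a::{real_inner, complete_space} \<Rightarrow> 'a"
    and I :: "'i set" and a :: "'i \<Rightarrow> real"
    and p :: nat and m :: "nat \<Rightarrow> nat" and \<omega> :: "nat \<Rightarrow> real"
    and idx :: "nat \<Rightarrow> nat \<Rightarrow> 'i"
  assumes finI: "finite I"
    and ne: "\<forall>i\<in>I. nonexpansive (T i)"
    and fixne: "(\<Inter>i\<in>I. Fix (T i)) \<noteq> {}"
    and av: "\<forall>i\<in>I. 0 < a i \<and> a i < 1 \<and> averaged (a i) (T i)"
    and p: "0 < p"
    and m: "\<forall>k\<in>{1..p}. 0 < m k"
    and \<omega>: "\<forall>k\<in>{1..p}. 0 < \<omega> k \<and> \<omega> k \<le> 1"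
    and surj: "(\<lambda>(k, l). idx k l) ` {(k, l). k \<in> {1..p} \<and> l \<in> {1..m k}} = I"
    and sum1: "(\<Sum>k=1..p. \<omega> k) = 1"
  defines "Tc \<equiv> (\<lambda>x. \<Sum>k=1..p. \<omega> k *\<^sub>R comp_chain T (idx k) (m k) x)"
    and "\<alpha> \<equiv> (\<Sum>k=1..p. \<omega> k /
                 (1 + 1 / (\<Sum>i=1..m k. a (idx k i) / (1 - a (idx k i)))))"
  shows "averaged \<alpha> Tc \<and> Fix Tc = (\<Inter>i\<in>I. Fix (T i))
    \<and> (\<forall>(lam :: nat \<Rightarrow> real) x.
          (\<forall>n. 0 < lam n \<and> lam n < 1 / \<alpha>)
          \<longrightarrow> filterlim (\<lambda>N. \<Sum>n<N. lam n * (1 / \<alpha> - lam n)) at_top sequentially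
          \<longrightarrow> (\<forall>n. x (Suc n) = x n + lam n *\<^sub>R (Tc (x n) - x n))
          \<longrightarrow> (\<exists>z\<in>(\<Inter>i\<in>I. Fix (T i)). weakly_converges x z))"
proof -
  have avg: "averaged (a (idx k l)) (T (idx k l))" if "k \<in> {1..p}" "l \<in> {1..m k}" for k l
    using av surj that by blast
  have avg_Tc: "averaged \<alpha> Tc"
    unfolding Tc_def \<alpha>_def using p m \<omega> sum1 avg by (intro averaged_sum_comp_chains) auto
  obtain z where z: "z \<in> (\<Inter>i\<in>I. Fix (T i))"
    using fixne by blast
  have "T (idx k l) z = z" if "k \<in> {1..p}" "l \<in> {1..m k}" for k l
    using z surj that unfolding Fix_def by blast
  then have "Fix Tc = (\<Inter>k\<in>{1..p}. \<Inter>l\<in>{1..m k}. Fix (T (idx k l)))"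
    unfolding Tc_def using \<omega> sum1 avg by (intro Fix_sum_comp_chains[where z = z and a = a]) auto
  also have "\<dots> = (\<Inter>i\<in>I. Fix (T i))"
    unfolding surj[symmetric] by auto
  finally have Fix_Tc: "Fix Tc = (\<Inter>i\<in>I. Fix (T i))" .
  show ?thesis
    using avg_Tc Fix_Tc fixne averaged_relaxation_weakly_converges[OF avg_Tc] by auto
qed

end
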